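(* Let $\mathcal X$ be finite and $F=(F_x)_{x\in\mathcal X}$ a random vector whose entries $F_x$ are $\sigma_x$-sub-Gaussian with mean $\mu_x$, $\sigma_x\ge0$. For $p\in\Delta(\mathcal X)$ and $\tau\in(0,\infty)^{\mathcal X}$ let $$\mathcal V_\tau(p):=\sum_{x\in\mathcal X}p_x\Big(\mu_x+\frac{\sigma_x^2}{2\tau_x}-\tau_x\ln p_x\Big).$$ (i) If $p_x\in(0,1)$ and $\sigma_x>0$ for all $x$, then $\min_\tau\mathcal V_\tau(p)$ is attained at $\tau^*_x=\sigma_x/\sqrt{-2\ln p_x}$ and equals $\mathcal V(p):=\sum_x p_x\big(\mu_x+\sqrt{2\ln(1/p_x)}\,\sigma_x\big)$. (ii) $\mathcal V$ (with $0\cdot\sqrt{2\ln(1/0)}:=0$) is concave on $\Delta(\mathcal X)$, and strictly concave if $\sigma_x>0$ for all $x$. (iii) If the maximizer $X^*=\arg\max_xF_x$ is almost surely unique, then with $\pi_x:=\mathbb P[x\in X^*]$, $$\max_{p\in\Delta(\mathcal X)}\mathcal V(p)\ge\mathcal V(\pi)\ge\mathbb E\big[\max_{x}F_x\big].$$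
   Context: A real random variable $X$ is $\sigma$-sub-Gaussian if $\mathbb E[\exp(\lambda(X-\mathbb E X))]\le\exp(\sigma^2\lambda^2/2)$ for all $\lambda\in\mathbb R$. $\Delta(\mathcal X)$ is the probability simplex on $\mathcal X$. *)

theory Defs
  imports "HOL-Analysis.Analysis" "HOL-Probability.Probability"
begin

definition subgaussian :: "'b measure \<Rightarrow> ('b \<Rightarrow> real) \<Rightarrow> real \<Rightarrow> bool" where
  "subgaussian M X \<sigma> \<longleftrightarrow>
     X \<in> borel_measurable M \<and> integrable M X \<and>
     (\<forall>l::real. integrable M (\<lambda>\<omega>. exp (l * (X \<omega> - integral\<^sup>L M X))) \<and>
        integral\<^sup>L M (\<lambda>\<omega>. exp (l * (X \<omega> - integral\<^sup>L M X))) \<le> exp (\<sigma>\<^sup>2 * l\<^sup>2 / 2))"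

definition prob_simplex :: "(real ^ 'a::finite) set" where
  "prob_simplex = {p. (\<forall>x. 0 \<le> p $ x) \<and> (\<Sum>x\<in>UNIV. p $ x) = 1}"

definition Vtau :: "('a::finite \<Rightarrow> real) \<Rightarrow> ('a \<Rightarrow> real) \<Rightarrow> ('a \<Rightarrow> real) \<Rightarrow> real ^ 'a \<Rightarrow> real" where
  "Vtau \<mu> \<sigma> \<tau> p = (\<Sum>x\<in>UNIV. p $ x * (\<mu> x + (\<sigma> x)\<^sup>2 / (2 * \<tau> x) - \<tau> x * ln (p $ x)))"

definition Vfun :: "('a::finite \<Rightarrow> real) \<Rightarrow> ('a \<Rightarrow> real) \<Rightarrow> real ^ 'a \<Rightarrow> real" where
  "Vfun \<mu> \<sigma> p = (\<Sum>x\<in>UNIV. if p $ x = 0 then 0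
        else p $ x * (\<mu> x + sqrt (2 * ln (1 / p $ x)) * \<sigma> x))"

definition strictly_concave_on :: "'a::real_vector set \<Rightarrow> ('a \<Rightarrow> real) \<Rightarrow> bool" where
  "strictly_concave_on S f \<longleftrightarrow> convex S \<and>
     (\<forall>x\<in>S. \<forall>y\<in>S. x \<noteq> y \<longrightarrow> (\<forall>t. 0 < t \<and> t < 1 \<longrightarrow>
        f ((1 - t) *\<^sub>R x + t *\<^sub>R y) > (1 - t) * f x + t * f y))"

end

(* Write h(s) = s sqrt(2 ln(1/s)) and r_x = sqrt(-2 ln p_x), so that -ln p_x = r_x^2/2.
   (i) Each summand of V_tau(p) is p_x (mu_x + sigma_x^2/(2 tau_x) + tau_x r_x^2/2), which by AM-GM
   is at least p_x (mu_x + sigma_x r_x), with equality at tau_x = sigma_x / r_x.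
   (ii) V(p) = sum_x mu_x p_x + sigma_x h(p_x). The function h is continuous on [0,1] and has
   derivative r - 1/r on (0,1), which is strictly decreasing in s; so h is strictly concave, and so
   is V when all sigma_x > 0.
   (iii) Almost surely max_x F_x = sum_x F_x 1[x in X*]. For an event A of probability P > 0,
   integrating Young's inequality against exp(l (F_x - mu_x)) and using sub-Gaussianity gives
   l E[(F_x - mu_x) 1_A] <= P (sigma_x^2 l^2/2 - ln P) for all l > 0; optimising over l yields
   E[F_x 1_A] <= mu_x P + sigma_x h(P). Summing over x with A = {x in X*} gives E[max F] <= V(pi). *)

theory Submission
  imports Defs
begin

section \<open>Strict concavity\<close>

lemma strictly_concave_on_imp_concave_on:
  assumes "strictly_concave_on S f"
  shows "concave_on S f"
  unfolding concave_on_def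
proof (rule convex_onI)
  fix t :: real and x y assume t: "0 < t" "t < 1" and "x \<in> S" "y \<in> S"
  show "- f ((1 - t) *\<^sub>R x + t *\<^sub>R y) \<le> (1 - t) * - f x + t * - f y"
  proof (cases "x = y")
    case True then show ?thesis
      unfolding True scaleR_collapse by (simp add: algebra_simps)
  next
    case False
    then have "(1 - t) * f x + t * f y < f ((1 - t) *\<^sub>R x + t *\<^sub>R y)"
      using assms t \<open>x \<in> S\<close> \<open>y \<in> S\<close> unfolding strictly_concave_on_def by blast
    then show ?thesis by linarith
  qed
qed (use assms in \<open>simp add: strictly_concave_on_def\<close>)

lemma strictly_concave_on_realI:
  fixes f f' :: "real \<Rightarrow> real"
  assumes cont: "continuous_on {a..b} f"
    and deriv: "\<And>x. a < x \<Longrightarrow> x < b \<Longrightarrow> (f has_real_derivative f' x) (at x)"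
    and decr: "\<And>x y. a < x \<Longrightarrow> x < y \<Longrightarrow> y < b \<Longrightarrow> f' y < f' x"
  shows "strictly_concave_on {a..b} f"
proof -
  have mvt: "\<exists>z. x < z \<and> z < y \<and> f y - f x = (y - x) * f' z"
    if "a \<le> x" "x < y" "y \<le> b" for x y
  proof -
    have "\<exists>l z. x < z \<and> z < y \<and> (f has_real_derivative l) (at z) \<and> f y - f x = (y - x) * l"
    proof (rule MVT[OF \<open>x < y\<close>])
      show "continuous_on {x..y} f"
        using continuous_on_subset[OF cont] that by auto
      show "f differentiable (at z)" if "x < z" "z < y" for z
        using deriv[of z] that \<open>a \<le> x\<close> \<open>y \<le> b\<close> real_differentiable_def by force
    qed
    then obtain l z where z: "x < z" "z < y" "(f has_real_derivative l) (at z)" "f y - f x = (y - x) * l"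
      by blast
    have "(f has_real_derivative f' z) (at z)"
      using deriv z that by simp
    with z show ?thesis using DERIV_unique by blast
  qed
  have lt: "(1 - t) * f x + t * f y < f ((1 - t) * x + t * y)"
    if xy: "a \<le> x" "x < y" "y \<le> b" and t: "0 < t" "t < 1" for x y t :: real
  proof -
    define c where "c = (1 - t) * x + t * y"
    have cx: "c - x = t * (y - x)" and yc: "y - c = (1 - t) * (y - x)"
      unfolding c_def by (simp_all add: algebra_simps)
    have "0 < t * (y - x)" "0 < (1 - t) * (y - x)"
      using xy t by simp_all
    then have "x < c" "c < y"
      unfolding cx[symmetric] yc[symmetric] by simp_all
    then obtain z1 z2 where z: "x < z1" "z1 < c" "c < z2" "z2 < y"
      and fx: "f c - f x = (c - x) * f' z1" and fy: "f y - f c = (y - c) * f' z2"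
      using mvt[of x c] mvt[of c y] xy by auto
    have "(1 - t) * f x + t * f y = f c - t * (1 - t) * (y - x) * (f' z1 - f' z2)"
    proof -
      have fx': "f x = f c - t * (y - x) * f' z1" using fx cx by simp
      have fy': "f y = f c + (1 - t) * (y - x) * f' z2" using fy yc by simp
      show ?thesis unfolding fx' fy' by (simp add: algebra_simps)
    qed
    moreover have "0 < t * (1 - t) * (y - x) * (f' z1 - f' z2)"
      using t xy z decr[of z1 z2] by simp
    ultimately show ?thesis unfolding c_def by linarith
  qed
  show ?thesis
    unfolding strictly_concave_on_def
  proof (intro conjI convex_real_interval ballI allI impI)
    fix x y t :: real assume x: "x \<in> {a..b}" and y: "y \<in> {a..b}" and "x \<noteq> y" and t: "0 < t \<and> t < 1"
    then consider "x < y" | "y < x" by linarith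
    then show "(1 - t) * f x + t * f y < f ((1 - t) *\<^sub>R x + t *\<^sub>R y)"
    proof cases
      case 1 then show ?thesis using lt[of x y t] t x y by simp
    next
      case 2 then show ?thesis using lt[of y x "1 - t"] t x y by (simp add: add.commute)
    qed
  qed
qed

lemma concave_on_linear_plus_cmul:
  fixes g :: "real \<Rightarrow> real"
  assumes g: "concave_on S g" and c: "0 \<le> c"
  shows "concave_on S (\<lambda>s. m * s + c * g s)"
  unfolding concave_on_iff
proof (intro conjI ballI allI impI)
  show "convex S" using concave_on_imp_convex[OF g] .
  fix x y u v :: real assume "x \<in> S" "y \<in> S" "0 \<le> u" "0 \<le> v" "u + v = 1"
  moreover from this have "u = 1 - v" by simp
  ultimately have "c * (u * g x + v * g y) \<le> c * g (u * x + v * y)"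
    using concave_onD[OF g, of v x y] c by (intro mult_left_mono) simp_all
  then show "u * (m * x + c * g x) + v * (m * y + c * g y)
      \<le> m * (u *\<^sub>R x + v *\<^sub>R y) + c * g (u *\<^sub>R x + v *\<^sub>R y)"
    by (simp add: algebra_simps)
qed

lemma strictly_concave_on_linear_plus_cmul:
  fixes g :: "real \<Rightarrow> real"
  assumes g: "strictly_concave_on S g" and c: "0 < c"
  shows "strictly_concave_on S (\<lambda>s. m * s + c * g s)"
  unfolding strictly_concave_on_def
proof (intro conjI ballI allI impI)
  show "convex S" using g by (simp add: strictly_concave_on_def)
  fix x y t :: real assume "x \<in> S" "y \<in> S" "x \<noteq> y" "0 < t \<and> t < 1"
  then have "c * ((1 - t) * g x + t * g y) < c * g ((1 - t) * x + t * y)"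
    using g c unfolding strictly_concave_on_def by (intro mult_strict_left_mono) auto
  then show "(1 - t) * (m * x + c * g x) + t * (m * y + c * g y)
      < m * ((1 - t) *\<^sub>R x + t *\<^sub>R y) + c * g ((1 - t) *\<^sub>R x + t *\<^sub>R y)"
    by (simp add: algebra_simps)
qed

section \<open>Concavity of V on the probability simplex\<close>

definition sqrt_log_term :: "real \<Rightarrow> real" where
  "sqrt_log_term s = (if s = 0 then 0 else s * sqrt (2 * ln (1 / s)))"

lemma sqrt_log_term_0 [simp]: "sqrt_log_term 0 = 0"
  by (simp add: sqrt_log_term_def)

lemma sqrt_log_term_pos: "0 < s \<Longrightarrow> sqrt_log_term s = s * sqrt (- 2 * ln s)"
  by (simp add: sqrt_log_term_def ln_div)

lemma sqrt_log_term_le: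
  assumes "0 < s" "s < 1"
  shows "\<bar>sqrt_log_term s\<bar> \<le> sqrt (2 * s)"
proof -
  have "- ln s \<le> 1 / s - 1"
    using ln_le_minus_one[of "1 / s"] assms by (simp add: ln_div)
  then have "s * (- ln s) \<le> s * (1 / s - 1)"
    using assms by (intro mult_left_mono) simp_all
  also have "\<dots> = 1 - s"
    using assms by (simp add: field_simps)
  finally have "s * (s * (- ln s)) \<le> s * (1 - s)"
    using assms by (intro mult_left_mono) simp_all
  moreover have "s\<^sup>2 * (- 2 * ln s) = 2 * (s * (s * (- ln s)))"
    by (simp add: power2_eq_square)
  moreover have "s * (1 - s) \<le> s"
    using assms by simp
  ultimately have le: "s\<^sup>2 * (- 2 * ln s) \<le> 2 * s"
    by linarith
  have "0 \<le> - 2 * ln s"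
    using assms by simp
  then have "0 \<le> s\<^sup>2 * (- 2 * ln s)"
    by (rule mult_nonneg_nonneg[OF zero_le_power2])
  moreover have eq: "sqrt_log_term s = sqrt (s\<^sup>2 * (- 2 * ln s))"
    using assms by (simp only: sqrt_log_term_pos real_sqrt_mult real_sqrt_abs abs_of_pos)
  ultimately have "0 \<le> sqrt_log_term s"
    by simp
  moreover have "sqrt_log_term s \<le> sqrt (2 * s)"
    unfolding eq by (rule real_sqrt_le_mono[OF le])
  ultimately show ?thesis
    unfolding abs_le_iff by linarith
qed

lemma continuous_on_sqrt_log_term: "continuous_on {0..1} sqrt_log_term"
  unfolding continuous_on_eq_continuous_within
proof
  fix x :: real assume x: "x \<in> {0..1}"
  show "continuous (at x within {0..1}) sqrt_log_term"
  proof (cases "x = 0")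
    case True
    have "((\<lambda>s. sqrt (2 * s)) \<longlongrightarrow> sqrt (2 * 0)) (at_right (0::real))"
      by (intro tendsto_intros)
    then have lim: "((\<lambda>s. sqrt (2 * s)) \<longlongrightarrow> 0) (at_right (0::real))"
      by (simp only: mult_zero_right real_sqrt_zero)
    have "\<forall>\<^sub>F s in at_right 0. norm (sqrt_log_term s) \<le> sqrt (2 * s)"
      unfolding eventually_at_right[OF zero_less_one]
    proof (intro exI[of _ 1] conjI allI impI)
      fix s :: real assume "0 < s" "s < 1"
      then show "norm (sqrt_log_term s) \<le> sqrt (2 * s)"
        using sqrt_log_term_le by simp
    qed simp
    then have "(sqrt_log_term \<longlongrightarrow> 0) (at_right 0)"
      using lim by (rule Lim_null_comparison)
    moreover have "at (0::real) within {0..1} = at_right 0"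
      by (rule at_within_Icc_at_right) simp
    ultimately have "(sqrt_log_term \<longlongrightarrow> sqrt_log_term 0) (at 0 within {0..1})"
      by simp
    then show ?thesis
      unfolding True continuous_within .
  next
    case False
    then have "0 < x" using x by simp
    have "\<forall>\<^sub>F s in nhds x. sqrt_log_term s = s * sqrt (- 2 * ln s)"
      using eventually_nhds_in_open[of "{0<..}" x] \<open>0 < x\<close>
      by (auto elim!: eventually_mono simp: sqrt_log_term_pos)
    then have "isCont sqrt_log_term x \<longleftrightarrow> isCont (\<lambda>s. s * sqrt (- 2 * ln s)) x"
      by (rule isCont_cong)
    moreover have "isCont (\<lambda>s. s * sqrt (- 2 * ln s)) x"
      using \<open>0 < x\<close> by (intro continuous_intros) auto
    ultimately show ?thesis
      by (simp add: continuous_at_imp_continuous_at_within)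
  qed
qed

lemma sqrt_log_term_has_real_derivative:
  assumes "0 < s" "s < 1"
  shows "(sqrt_log_term has_real_derivative
           sqrt (- 2 * ln s) - 1 / sqrt (- 2 * ln s)) (at s)"
proof -
  have "((\<lambda>s. s * sqrt (- 2 * ln s)) has_real_derivative
           sqrt (- 2 * ln s) - 1 / sqrt (- 2 * ln s)) (at s)"
    using assms by (auto intro!: derivative_eq_intros simp: field_simps)
  then show ?thesis
    by (rule has_field_derivative_transform_within_open[where S = "{0<..}"])
      (use assms in \<open>auto simp: sqrt_log_term_pos\<close>)
qed

lemma strictly_concave_on_sqrt_log_term: "strictly_concave_on {0..1} sqrt_log_term"
proof (rule strictly_concave_on_realI[OF continuous_on_sqrt_log_term sqrt_log_term_has_real_derivative])
  fix x y :: real assume "0 < x" "x < y" "y < 1"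
  then have r: "sqrt (- 2 * ln y) < sqrt (- 2 * ln x)" "0 < sqrt (- 2 * ln y)"
    by auto
  then have "1 / sqrt (- 2 * ln x) < 1 / sqrt (- 2 * ln y)"
    by (intro divide_strict_left_mono) auto
  with r show "sqrt (- 2 * ln y) - 1 / sqrt (- 2 * ln y) < sqrt (- 2 * ln x) - 1 / sqrt (- 2 * ln x)"
    by linarith
qed

lemma prob_simplex_nth: "p \<in> prob_simplex \<Longrightarrow> p $ x \<in> {0..1}"
proof -
  assume "p \<in> prob_simplex"
  then have nonneg: "\<forall>x. 0 \<le> p $ x" and sum: "(\<Sum>x\<in>UNIV. p $ x) = 1"
    by (auto simp: prob_simplex_def)
  have "p $ x \<le> (\<Sum>x\<in>UNIV. p $ x)"
    using nonneg by (intro member_le_sum) auto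
  with nonneg sum show ?thesis by auto
qed

lemma convex_prob_simplex: "convex (prob_simplex :: (real ^ 'a::finite) set)"
  unfolding convex_def
proof (intro ballI allI impI)
  fix p q :: "real ^ 'a" and u v :: real
  assume p: "p \<in> prob_simplex" and q: "q \<in> prob_simplex" and uv: "0 \<le> u" "0 \<le> v" "u + v = 1"
  have "(\<Sum>x\<in>UNIV. u * p $ x + v * q $ x) = u * (\<Sum>x\<in>UNIV. p $ x) + v * (\<Sum>x\<in>UNIV. q $ x)"
    by (simp add: sum.distrib sum_distrib_left)
  also have "\<dots> = 1" using p q uv by (simp add: prob_simplex_def)
  finally show "u *\<^sub>R p + v *\<^sub>R q \<in> prob_simplex"
    using p q uv unfolding prob_simplex_def by auto
qed

lemma compact_prob_simplex: "compact (prob_simplex :: (real ^ 'a::finite) set)"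
proof (rule compact_eq_bounded_closed[THEN iffD2, OF conjI])
  show "bounded (prob_simplex :: (real ^ 'a) set)"
    unfolding bounded_iff
  proof (intro exI ballI)
    fix p :: "real ^ 'a" assume p: "p \<in> prob_simplex"
    have "norm p \<le> (\<Sum>x\<in>UNIV. \<bar>p $ x\<bar>)" by (rule norm_le_l1_cart)
    also have "\<dots> = 1" using p by (simp add: prob_simplex_def)
    finally show "norm p \<le> 1" .
  qed
  have eq: "(prob_simplex :: (real ^ 'a) set) = {p. \<forall>x. 0 \<le> p $ x} \<inter> {p. (\<Sum>x\<in>UNIV. p $ x) = 1}"
    unfolding prob_simplex_def by auto
  show "closed (prob_simplex :: (real ^ 'a) set)"
    unfolding eq by (intro closed_Int closed_Collect_all closed_Collect_le closed_Collect_eq continuous_intros)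
qed

lemma uniform_in_prob_simplex: "(\<chi> x. 1 / real CARD('a::finite)) \<in> (prob_simplex :: (real ^ 'a) set)"
  by (simp add: prob_simplex_def)

lemma concave_on_prob_simplex_sum:
  fixes f :: "'a::finite \<Rightarrow> real \<Rightarrow> real"
  assumes "\<And>x. concave_on {0..1} (f x)"
  shows "concave_on prob_simplex (\<lambda>p. \<Sum>x\<in>UNIV. f x (p $ x))"
  unfolding concave_on_def
proof (rule convex_onI[OF _ convex_prob_simplex])
  fix t :: real and p q :: "real ^ 'a" assume t: "0 < t" "t < 1" and pq: "p \<in> prob_simplex" "q \<in> prob_simplex"
  have "(\<Sum>x\<in>UNIV. (1 - t) * f x (p $ x) + t * f x (q $ x))
      \<le> (\<Sum>x\<in>UNIV. f x ((1 - t) * p $ x + t * q $ x))"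
    using concave_onD[OF assms] t prob_simplex_nth[OF pq(1)] prob_simplex_nth[OF pq(2)]
    by (intro sum_mono) simp
  then show "- (\<Sum>x\<in>UNIV. f x (((1 - t) *\<^sub>R p + t *\<^sub>R q) $ x))
      \<le> (1 - t) * - (\<Sum>x\<in>UNIV. f x (p $ x)) + t * - (\<Sum>x\<in>UNIV. f x (q $ x))"
    by (simp add: sum.distrib sum_distrib_left)
qed

lemma strictly_concave_on_prob_simplex_sum:
  fixes f :: "'a::finite \<Rightarrow> real \<Rightarrow> real"
  assumes "\<And>x. strictly_concave_on {0..1} (f x)"
  shows "strictly_concave_on prob_simplex (\<lambda>p. \<Sum>x\<in>UNIV. f x (p $ x))"
  unfolding strictly_concave_on_def
proof (intro conjI convex_prob_simplex ballI allI impI)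
  fix p q :: "real ^ 'a" and t :: real
  assume pq: "p \<in> prob_simplex" "q \<in> prob_simplex" "p \<noteq> q" and t: "0 < t \<and> t < 1"
  obtain i where "p $ i \<noteq> q $ i" using \<open>p \<noteq> q\<close> by (metis vec_eq_iff)
  have "(\<Sum>x\<in>UNIV. (1 - t) * f x (p $ x) + t * f x (q $ x))
      < (\<Sum>x\<in>UNIV. f x ((1 - t) * p $ x + t * q $ x))"
  proof (rule sum_strict_mono_ex1)
    show "\<forall>x\<in>UNIV. (1 - t) * f x (p $ x) + t * f x (q $ x) \<le> f x ((1 - t) * p $ x + t * q $ x)"
      using concave_onD[OF strictly_concave_on_imp_concave_on[OF assms]] t
        prob_simplex_nth[OF pq(1)] prob_simplex_nth[OF pq(2)]
      by simp
    have "(1 - t) * f i (p $ i) + t * f i (q $ i) < f i ((1 - t) * p $ i + t * q $ i)"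
      using assms[of i] \<open>p $ i \<noteq> q $ i\<close> t prob_simplex_nth[OF pq(1)] prob_simplex_nth[OF pq(2)]
      unfolding strictly_concave_on_def by simp
    then show "\<exists>x\<in>UNIV. (1 - t) * f x (p $ x) + t * f x (q $ x) < f x ((1 - t) * p $ x + t * q $ x)"
      by blast
  qed simp
  then show "(1 - t) * (\<Sum>x\<in>UNIV. f x (p $ x)) + t * (\<Sum>x\<in>UNIV. f x (q $ x))
      < (\<Sum>x\<in>UNIV. f x (((1 - t) *\<^sub>R p + t *\<^sub>R q) $ x))"
    by (simp add: sum.distrib sum_distrib_left)
qed

lemma Vfun_eq_sum: "Vfun \<mu> \<sigma> p = (\<Sum>x\<in>UNIV. \<mu> x * p $ x + \<sigma> x * sqrt_log_term (p $ x))"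
  unfolding Vfun_def
proof (intro sum.cong refl)
  fix x
  show "(if p $ x = 0 then 0 else p $ x * (\<mu> x + sqrt (2 * ln (1 / p $ x)) * \<sigma> x))
      = \<mu> x * p $ x + \<sigma> x * sqrt_log_term (p $ x)"
    by (cases "p $ x = 0") (simp_all add: sqrt_log_term_def distrib_left mult_ac)
qed

lemma concave_on_Vfun:
  assumes "\<And>x. 0 \<le> \<sigma> x"
  shows "concave_on prob_simplex (Vfun \<mu> \<sigma>)"
  unfolding Vfun_eq_sum[abs_def]
  by (intro concave_on_prob_simplex_sum concave_on_linear_plus_cmul assms
      strictly_concave_on_imp_concave_on strictly_concave_on_sqrt_log_term)

lemma strictly_concave_on_Vfun:
  assumes "\<And>x. 0 < \<sigma> x"
  shows "strictly_concave_on prob_simplex (Vfun \<mu> \<sigma>)"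
  unfolding Vfun_eq_sum[abs_def]
  by (intro strictly_concave_on_prob_simplex_sum strictly_concave_on_linear_plus_cmul assms
      strictly_concave_on_sqrt_log_term)

lemma continuous_on_Vfun: "continuous_on prob_simplex (Vfun \<mu> \<sigma>)"
proof -
  have "continuous_on prob_simplex (\<lambda>p. sqrt_log_term (p $ x))" for x
    by (rule continuous_on_compose2[OF continuous_on_sqrt_log_term])
      (auto intro!: continuous_intros dest: prob_simplex_nth[where x = x])
  then show ?thesis
    unfolding Vfun_eq_sum[abs_def] by (intro continuous_intros)
qed

lemma Vfun_attains_max: "\<exists>p\<in>prob_simplex. \<forall>q\<in>prob_simplex. Vfun \<mu> \<sigma> q \<le> Vfun \<mu> \<sigma> p"
  using continuous_attains_sup[OF compact_prob_simplex _ continuous_on_Vfun] uniform_in_prob_simplex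
  by blast

section \<open>Minimising V_tau over tau\<close>

lemma mult_le_sq_div_add_sq:
  fixes \<sigma> r \<tau> :: real
  assumes "0 < \<tau>"
  shows "\<sigma> * r \<le> \<sigma>\<^sup>2 / (2 * \<tau>) + \<tau> * r\<^sup>2 / 2"
proof -
  have "0 \<le> (\<sigma> - \<tau> * r)\<^sup>2 / (2 * \<tau>)"
    using assms by simp
  also have "\<dots> = \<sigma>\<^sup>2 / (2 * \<tau>) + \<tau> * r\<^sup>2 / 2 - \<sigma> * r"
    using assms by (simp add: field_simps power2_eq_square)
  finally show ?thesis by simp
qed

lemma sq_div_add_sq_at_optimum:
  fixes \<sigma> r :: real
  assumes "0 < r"
  shows "\<sigma>\<^sup>2 / (2 * (\<sigma> / r)) + \<sigma> / r * r\<^sup>2 / 2 = \<sigma> * r"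
  using assms by (cases "\<sigma> = 0") (simp_all add: field_simps power2_eq_square)

lemma sqrt_log_le_Vtau_term:
  assumes "0 < s" "s \<le> 1" "0 < \<tau>"
  shows "\<sigma> * sqrt (- 2 * ln s) \<le> \<sigma>\<^sup>2 / (2 * \<tau>) - \<tau> * ln s"
proof -
  define r where "r = sqrt (- 2 * ln s)"
  have "ln s = - (r\<^sup>2 / 2)"
    using assms unfolding r_def by simp
  then show ?thesis
    unfolding r_def[symmetric] using mult_le_sq_div_add_sq[OF assms(3), of \<sigma> r] by simp
qed

lemma Vtau_term_at_optimum:
  assumes "0 < s" "s < 1"
  shows "\<sigma>\<^sup>2 / (2 * (\<sigma> / sqrt (- 2 * ln s))) - \<sigma> / sqrt (- 2 * ln s) * ln s
    = \<sigma> * sqrt (- 2 * ln s)"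
proof -
  define r where "r = sqrt (- 2 * ln s)"
  have "0 < r" "ln s = - (r\<^sup>2 / 2)"
    using assms unfolding r_def by simp_all
  then show ?thesis
    unfolding r_def[symmetric] using sq_div_add_sq_at_optimum[of r \<sigma>] by simp
qed

lemma Vfun_eq_sum_pos:
  assumes "\<And>x. 0 < p $ x"
  shows "Vfun \<mu> \<sigma> p = (\<Sum>x\<in>UNIV. p $ x * (\<mu> x + \<sigma> x * sqrt (- 2 * ln (p $ x))))"
  unfolding Vfun_eq_sum using assms by (simp add: sqrt_log_term_pos algebra_simps)

lemma Vfun_le_Vtau:
  assumes "\<And>x. 0 < p $ x" "\<And>x. p $ x \<le> 1" "\<And>x. 0 < \<tau> x"
  shows "Vfun \<mu> \<sigma> p \<le> Vtau \<mu> \<sigma> \<tau> p"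
  unfolding Vfun_eq_sum_pos[OF assms(1)] Vtau_def
  using assms sqrt_log_le_Vtau_term by (intro sum_mono mult_left_mono) (simp_all add: less_imp_le)

lemma Vtau_optimal_eq_Vfun:
  assumes "\<And>x. 0 < p $ x" "\<And>x. p $ x < 1"
  shows "Vtau \<mu> \<sigma> (\<lambda>x. \<sigma> x / sqrt (- 2 * ln (p $ x))) p = Vfun \<mu> \<sigma> p"
  unfolding Vfun_eq_sum_pos[OF assms(1)] Vtau_def
  using assms Vtau_term_at_optimum by (simp add: add_diff_eq[symmetric])

lemma Vtau_optimal_le:
  assumes "\<And>x. 0 < p $ x" "\<And>x. p $ x < 1" "\<And>x. 0 < \<tau> x"
  shows "Vtau \<mu> \<sigma> (\<lambda>x. \<sigma> x / sqrt (- 2 * ln (p $ x))) p \<le> Vtau \<mu> \<sigma> \<tau> p"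
  using Vfun_le_Vtau[OF assms(1) less_imp_le[OF assms(2)] assms(3)]
  unfolding Vtau_optimal_eq_Vfun[OF assms(1,2)] .

section \<open>Bounding the expected maximum\<close>

lemma le_exp_div_add_ln:
  fixes z t :: real
  assumes "0 < t"
  shows "z \<le> exp z / t + ln t - 1"
  using ln_le_minus_one[of "exp z / t"] assms by (simp add: ln_div)

text \<open>A change of measure: Young's inequality z \<le> exp z / t + ln t - 1, integrated over A with t = C / P(A).\<close>

lemma (in prob_space) integral_mult_indicator_le_ln:
  fixes Z :: "'a \<Rightarrow> real"
  assumes A: "A \<in> sets M" and P: "0 < prob A"
    and Z: "integrable M Z" and expZ: "integrable M (\<lambda>\<omega>. exp (Z \<omega>))"
    and C: "integral\<^sup>L M (\<lambda>\<omega>. exp (Z \<omega>)) \<le> C" "0 < C"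
  shows "integral\<^sup>L M (\<lambda>\<omega>. Z \<omega> * indicator A \<omega>) \<le> prob A * (ln C - ln (prob A))"
proof -
  define t where "t = C / prob A"
  have t: "0 < t"
    unfolding t_def using C(2) P by simp
  have int_ind: "integrable M (\<lambda>\<omega>. c * indicator A \<omega> :: real)" for c
    using A by (intro integrable_real_mult_indicator) simp_all
  have int_exp_ind: "integrable M (\<lambda>\<omega>. exp (Z \<omega>) * indicator A \<omega>)"
    using A expZ by (rule integrable_real_mult_indicator)
  have int_bound: "integrable M (\<lambda>\<omega>. exp (Z \<omega>) * indicator A \<omega> / t + (ln t - 1) * indicator A \<omega>)"
    using int_exp_ind int_ind by (intro Bochner_Integration.integrable_add integrable_divide)
  have "integral\<^sup>L M (\<lambda>\<omega>. Z \<omega> * indicator A \<omega>)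
      \<le> integral\<^sup>L M (\<lambda>\<omega>. exp (Z \<omega>) * indicator A \<omega> / t + (ln t - 1) * indicator A \<omega>)"
  proof (rule integral_mono[OF integrable_real_mult_indicator[OF A Z] int_bound])
    fix \<omega> show "Z \<omega> * indicator A \<omega> \<le> exp (Z \<omega>) * indicator A \<omega> / t + (ln t - 1) * indicator A \<omega>"
      using le_exp_div_add_ln[OF t, of "Z \<omega>"] by (cases "\<omega> \<in> A") simp_all
  qed
  also have "\<dots> = integral\<^sup>L M (\<lambda>\<omega>. exp (Z \<omega>) * indicator A \<omega>) / t + (ln t - 1) * prob A"
    using A by (simp add: Bochner_Integration.integral_add[OF integrable_divide[OF int_exp_ind] int_ind])
  also have "\<dots> \<le> C / t + (ln t - 1) * prob A"
  proof -
    have "integral\<^sup>L M (\<lambda>\<omega>. exp (Z \<omega>) * indicator A \<omega>) \<le> integral\<^sup>L M (\<lambda>\<omega>. exp (Z \<omega>))"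
      using int_exp_ind expZ by (rule integral_mono) (simp add: indicator_def)
    with C t show ?thesis
      by (simp add: divide_right_mono)
  qed
  also have "\<dots> = prob A * (ln C - ln (prob A))"
    using C(2) P unfolding t_def by (simp add: ln_div algebra_simps)
  finally show ?thesis .
qed

text \<open>The optimal l is sqrt(-2 ln P) / \<sigma>. If \<sigma> = 0 or P = 1 the claim is D \<le> 0,
  which follows by letting l grow, respectively shrink.\<close>

lemma le_sqrt_log_term_of_chernoff:
  fixes P D \<sigma> :: real
  assumes P: "0 < P" "P \<le> 1" and \<sigma>: "0 \<le> \<sigma>"
    and bound: "\<And>l. 0 < l \<Longrightarrow> l * D \<le> P * (\<sigma>\<^sup>2 * l\<^sup>2 / 2 - ln P)"
  shows "D \<le> \<sigma> * sqrt_log_term P"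
proof -
  define r where "r = sqrt (- 2 * ln P)"
  have r: "0 \<le> r" "r\<^sup>2 = - 2 * ln P"
    using P unfolding r_def by simp_all
  have bound': "l * D \<le> P * (\<sigma>\<^sup>2 * l\<^sup>2 + r\<^sup>2) / 2" if "0 < l" for l
    using bound[OF that] r(2) by (simp add: field_simps)
  have Pr: "0 \<le> P * r\<^sup>2"
    using P by simp
  consider "\<sigma> = 0" | "0 < \<sigma>" "r = 0" | "0 < \<sigma>" "0 < r"
    using \<sigma> r(1) by linarith
  then have "D \<le> \<sigma> * (P * r)"
  proof cases
    case 1
    show ?thesis
    proof (rule ccontr)
      assume "\<not> ?thesis"
      then have "0 < D" using 1 by simp
      define l where "l = (P * r\<^sup>2 + 1) / D"
      have "0 < l" unfolding l_def using \<open>0 < D\<close> Pr by simp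
      moreover have "l * D = P * r\<^sup>2 + 1" unfolding l_def using \<open>0 < D\<close> by simp
      ultimately show False using bound'[of l] 1 Pr by simp
    qed
  next
    case 2
    show ?thesis
    proof (rule ccontr)
      assume "\<not> ?thesis"
      then have "0 < D" using 2 by simp
      define l where "l = D / (P * \<sigma>\<^sup>2)"
      have "0 < l" unfolding l_def using \<open>0 < D\<close> P 2 by simp
      moreover have "P * (\<sigma>\<^sup>2 * l\<^sup>2) / 2 = l * D / 2"
        unfolding l_def using P 2 by (simp add: power2_eq_square)
      ultimately show False using bound'[of l] 2 \<open>0 < D\<close> by (simp add: zero_less_mult_iff)
    qed
  next
    case 3
    have "r / \<sigma> * D \<le> P * (\<sigma>\<^sup>2 * (r / \<sigma>)\<^sup>2 + r\<^sup>2) / 2"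
      using bound'[of "r / \<sigma>"] 3 by simp
    also have "\<dots> = r / \<sigma> * (\<sigma> * (P * r))"
      using 3 by (simp add: power2_eq_square field_simps)
    finally show ?thesis
      by (rule mult_left_le_imp_le) (use 3 in simp)
  qed
  then show ?thesis
    using P unfolding r_def by (simp add: sqrt_log_term_pos mult.assoc)
qed

lemma (in prob_space) subgaussian_integral_mult_indicator_le:
  assumes X: "subgaussian M X \<sigma>" and A: "A \<in> sets M" and \<sigma>: "0 \<le> \<sigma>"
  shows "integral\<^sup>L M (\<lambda>\<omega>. X \<omega> * indicator A \<omega>) \<le> expectation X * prob A + \<sigma> * sqrt_log_term (prob A)"
proof -
  define \<mu> where "\<mu> = expectation X"
  define D where "D = integral\<^sup>L M (\<lambda>\<omega>. (X \<omega> - \<mu>) * indicator A \<omega>)"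
  have int_X: "integrable M X"
    and int_exp: "\<And>l. integrable M (\<lambda>\<omega>. exp (l * (X \<omega> - \<mu>)))"
    and mgf: "\<And>l. integral\<^sup>L M (\<lambda>\<omega>. exp (l * (X \<omega> - \<mu>))) \<le> exp (\<sigma>\<^sup>2 * l\<^sup>2 / 2)"
    using X unfolding subgaussian_def \<mu>_def by auto
  have int_centered: "integrable M (\<lambda>\<omega>. (X \<omega> - \<mu>) * indicator A \<omega>)"
    using A int_X by (intro integrable_real_mult_indicator) simp_all
  have "integral\<^sup>L M (\<lambda>\<omega>. X \<omega> * indicator A \<omega>)
      = integral\<^sup>L M (\<lambda>\<omega>. (X \<omega> - \<mu>) * indicator A \<omega> + \<mu> * indicator A \<omega>)"
    by (simp add: algebra_simps)
  also have "\<dots> = D + \<mu> * prob A"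
    unfolding D_def using A
    by (simp add: Bochner_Integration.integral_add[OF int_centered
          integrable_real_mult_indicator[OF A integrable_const]])
  finally have split: "integral\<^sup>L M (\<lambda>\<omega>. X \<omega> * indicator A \<omega>) = D + \<mu> * prob A" .
  show ?thesis
  proof (cases "prob A = 0")
    case True
    then have "AE \<omega> in M. \<omega> \<notin> A"
      using A by (intro AE_not_in null_setsI) (simp_all add: emeasure_eq_measure)
    then have "AE \<omega> in M. (X \<omega> - \<mu>) * indicator A \<omega> = 0"
      by eventually_elim simp
    then have "D = 0"
      unfolding D_def by (rule integral_eq_zero_AE)
    then show ?thesis
      using split True unfolding \<mu>_def by simp
  next
    case False
    then have P: "0 < prob A" by (simp add: zero_less_measure_iff)
    have "l * D \<le> prob A * (\<sigma>\<^sup>2 * l\<^sup>2 / 2 - ln (prob A))" for l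
    proof -
      have "l * D = integral\<^sup>L M (\<lambda>\<omega>. l * (X \<omega> - \<mu>) * indicator A \<omega>)"
        unfolding D_def by (simp add: mult.assoc)
      also have "\<dots> \<le> prob A * (ln (exp (\<sigma>\<^sup>2 * l\<^sup>2 / 2)) - ln (prob A))"
        using A P int_X mgf int_exp
        by (intro integral_mult_indicator_le_ln) simp_all
      finally show ?thesis by simp
    qed
    then have "D \<le> \<sigma> * sqrt_log_term (prob A)"
      using P \<sigma> by (intro le_sqrt_log_term_of_chernoff) simp_all
    then show ?thesis
      using split unfolding \<mu>_def by simp
  qed
qed

definition argmax_event :: "'b measure \<Rightarrow> ('b \<Rightarrow> 'a \<Rightarrow> real) \<Rightarrow> 'a \<Rightarrow> 'b set" where
  "argmax_event M F x = {\<omega> \<in> space M. \<forall>y. F \<omega> y \<le> F \<omega> x}"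

lemma argmax_event_in_sets [measurable]:
  fixes F :: "'b \<Rightarrow> 'a::finite \<Rightarrow> real"
  assumes [measurable]: "\<And>x. (\<lambda>\<omega>. F \<omega> x) \<in> borel_measurable M"
  shows "argmax_event M F x \<in> sets M"
  unfolding argmax_event_def by measurable

lemma indicator_argmax_event:
  assumes "\<omega> \<in> space M" "\<forall>y. F \<omega> y \<le> F \<omega> x0" "\<And>x. \<forall>y. F \<omega> y \<le> F \<omega> x \<Longrightarrow> x = x0"
  shows "indicator (argmax_event M F x) \<omega> = (if x = x0 then 1 else 0 :: real)"
proof -
  have "\<omega> \<in> argmax_event M F x \<longleftrightarrow> x = x0"
    using assms unfolding argmax_event_def by blast
  then show ?thesis
    by (simp add: indicator_def)
qed

lemma AE_argmax_event_partition:
  fixes F :: "'b \<Rightarrow> 'a::finite \<Rightarrow> real"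
  assumes "AE \<omega> in M. \<exists>!x. \<forall>y. F \<omega> y \<le> F \<omega> x"
  shows "AE \<omega> in M. (\<Sum>x\<in>UNIV. indicator (argmax_event M F x) \<omega> :: real) = 1 \<and>
    Max (range (F \<omega>)) = (\<Sum>x\<in>UNIV. F \<omega> x * indicator (argmax_event M F x) \<omega>)"
  using assms AE_space
proof eventually_elim
  case (elim \<omega>)
  then obtain x0 where x0: "\<forall>y. F \<omega> y \<le> F \<omega> x0" and unique: "\<And>x. \<forall>y. F \<omega> y \<le> F \<omega> x \<Longrightarrow> x = x0"
    by blast
  have ind: "indicator (argmax_event M F x) \<omega> = (if x = x0 then 1 else 0 :: real)" for x
    using indicator_argmax_event[of \<omega> M F x0, OF \<open>\<omega> \<in> space M\<close> x0 unique] .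
  have "Max (range (F \<omega>)) = F \<omega> x0"
    using x0 by (intro Max_eqI) auto
  also have "\<dots> = (\<Sum>x\<in>UNIV. if x = x0 then F \<omega> x else 0)"
    by simp
  also have "\<dots> = (\<Sum>x\<in>UNIV. F \<omega> x * indicator (argmax_event M F x) \<omega>)"
    unfolding ind by (intro sum.cong) simp_all
  finally show ?case
    unfolding ind by simp
qed

context prob_space
begin

lemma argmax_prob_in_prob_simplex:
  fixes F :: "'a \<Rightarrow> 'i::finite \<Rightarrow> real"
  assumes [measurable]: "\<And>x. (\<lambda>\<omega>. F \<omega> x) \<in> borel_measurable M"
    and "AE \<omega> in M. \<exists>!x. \<forall>y. F \<omega> y \<le> F \<omega> x"
  shows "(\<chi> x. prob (argmax_event M F x)) \<in> prob_simplex"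
proof -
  have "(\<Sum>x\<in>UNIV. prob (argmax_event M F x)) = (\<Sum>x\<in>UNIV. expectation (indicator (argmax_event M F x)))"
    by simp
  also have "\<dots> = expectation (\<lambda>\<omega>. \<Sum>x\<in>UNIV. indicator (argmax_event M F x) \<omega>)"
    using argmax_event_in_sets[OF assms(1)]
    by (intro Bochner_Integration.integral_sum[symmetric] integrable_real_indicator)
      (simp_all add: less_top[symmetric])
  also have "\<dots> = expectation (\<lambda>\<omega>. 1)"
    using AE_argmax_event_partition[OF assms(2)] by (intro integral_cong_AE) auto
  also have "\<dots> = 1"
    by (simp add: prob_space)
  finally show ?thesis
    unfolding prob_simplex_def by simp
qed

lemma expectation_Max_le_Vfun:
  fixes F :: "'a \<Rightarrow> 'i::finite \<Rightarrow> real"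
  assumes subg: "\<And>x. subgaussian M (\<lambda>\<omega>. F \<omega> x) (\<sigma> x)" and \<sigma>: "\<And>x. 0 \<le> \<sigma> x"
    and mean: "\<And>x. \<mu> x = expectation (\<lambda>\<omega>. F \<omega> x)"
    and unique: "AE \<omega> in M. \<exists>!x. \<forall>y. F \<omega> y \<le> F \<omega> x"
  shows "expectation (\<lambda>\<omega>. Max (range (F \<omega>))) \<le> Vfun \<mu> \<sigma> (\<chi> x. prob (argmax_event M F x))"
proof -
  have [measurable]: "(\<lambda>\<omega>. F \<omega> x) \<in> borel_measurable M" and int: "integrable M (\<lambda>\<omega>. F \<omega> x)" for x
    using subg[of x] unfolding subgaussian_def by auto
  have "(\<lambda>\<omega>. Max (range (F \<omega>))) \<in> borel_measurable M"
    using borel_measurable_Max[of UNIV "\<lambda>x \<omega>. F \<omega> x" M] by simp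
  then have "expectation (\<lambda>\<omega>. Max (range (F \<omega>)))
      = expectation (\<lambda>\<omega>. \<Sum>x\<in>UNIV. F \<omega> x * indicator (argmax_event M F x) \<omega>)"
  proof (rule integral_cong_AE)
    show "(\<lambda>\<omega>. \<Sum>x\<in>UNIV. F \<omega> x * indicator (argmax_event M F x) \<omega>) \<in> borel_measurable M"
      by measurable
    show "AE \<omega> in M. Max (range (F \<omega>)) = (\<Sum>x\<in>UNIV. F \<omega> x * indicator (argmax_event M F x) \<omega>)"
      using AE_argmax_event_partition[OF unique] by (rule AE_mp) simp
  qed
  also have "\<dots> = (\<Sum>x\<in>UNIV. expectation (\<lambda>\<omega>. F \<omega> x * indicator (argmax_event M F x) \<omega>))"
    using int by (intro Bochner_Integration.integral_sum integrable_real_mult_indicator) simp_all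
  also have "\<dots> \<le> (\<Sum>x\<in>UNIV. expectation (\<lambda>\<omega>. F \<omega> x) * prob (argmax_event M F x)
      + \<sigma> x * sqrt_log_term (prob (argmax_event M F x)))"
    using subg \<sigma> by (intro sum_mono subgaussian_integral_mult_indicator_le) simp_all
  also have "\<dots> = Vfun \<mu> \<sigma> (\<chi> x. prob (argmax_event M F x))"
    by (simp add: Vfun_eq_sum mean)
  finally show ?thesis .
qed

end

theorem mainTheorem7:
  fixes M :: "'b measure" and F :: "'b \<Rightarrow> 'a::finite \<Rightarrow> real"
    and \<mu> \<sigma> :: "'a \<Rightarrow> real"
  assumes "prob_space M"
    and subg: "\<And>x. subgaussian M (\<lambda>\<omega>. F \<omega> x) (\<sigma> x)"
    and mean: "\<And>x. \<mu> x = integral\<^sup>L M (\<lambda>\<omega>. F \<omega> x)"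
    and sigma_nonneg: "\<And>x. 0 \<le> \<sigma> x"
  shows
    \<comment> \<open>(i)\<close>
    "(\<forall>p \<in> prob_simplex. (\<forall>x. 0 < p $ x \<and> p $ x < 1) \<and> (\<forall>x. 0 < \<sigma> x) \<longrightarrow>
        (let \<tau>s = (\<lambda>x. \<sigma> x / sqrt (- 2 * ln (p $ x))) in
           (\<forall>x. 0 < \<tau>s x) \<and>
           (\<forall>\<tau>. (\<forall>x. 0 < \<tau> x) \<longrightarrow> Vtau \<mu> \<sigma> \<tau>s p \<le> Vtau \<mu> \<sigma> \<tau> p) \<and>
           Vtau \<mu> \<sigma> \<tau>s p = Vfun \<mu> \<sigma> p))
     \<comment> \<open>(ii)\<close>
     \<and> concave_on prob_simplex (Vfun \<mu> \<sigma>)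
     \<and> ((\<forall>x. 0 < \<sigma> x) \<longrightarrow> strictly_concave_on prob_simplex (Vfun \<mu> \<sigma>))
     \<comment> \<open>(iii)\<close>
     \<and> ((AE \<omega> in M. \<exists>!x. \<forall>y. F \<omega> y \<le> F \<omega> x) \<longrightarrow>
        (let \<pi> = (\<chi> x. measure M {\<omega> \<in> space M. \<forall>y. F \<omega> y \<le> F \<omega> x}) in
           \<pi> \<in> prob_simplex \<and>
           (\<exists>p\<in>prob_simplex. (\<forall>q\<in>prob_simplex. Vfun \<mu> \<sigma> q \<le> Vfun \<mu> \<sigma> p) \<and> Vfun \<mu> \<sigma> \<pi> \<le> Vfun \<mu> \<sigma> p) \<and>
           integral\<^sup>L M (\<lambda>\<omega>. Max (range (F \<omega>))) \<le> Vfun \<mu> \<sigma> \<pi>))"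
proof -
  interpret prob_space M by fact
  have F_measurable: "(\<lambda>\<omega>. F \<omega> x) \<in> borel_measurable M" for x
    using subg[of x] unfolding subgaussian_def by blast
  note argmax_prob = argmax_prob_in_prob_simplex[where F = F, OF F_measurable]
  note expectation_Max = expectation_Max_le_Vfun[where \<mu> = \<mu>, OF subg sigma_nonneg mean]
  obtain p_max where "p_max \<in> prob_simplex" "\<forall>q\<in>prob_simplex. Vfun \<mu> \<sigma> q \<le> Vfun \<mu> \<sigma> p_max"
    using Vfun_attains_max by blast
  then show ?thesis
    unfolding Let_def argmax_event_def[symmetric]
    apply (intro conjI ballI impI)
    subgoal for p by (auto intro: divide_pos_pos)
    subgoal for p using Vtau_optimal_le[of p] by auto
    subgoal for p using Vtau_optimal_eq_Vfun[of p \<mu> \<sigma>] by auto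
    subgoal by (rule concave_on_Vfun[OF sigma_nonneg])
    subgoal using strictly_concave_on_Vfun by blast
    subgoal using argmax_prob by blast
    subgoal using argmax_prob by blast
    subgoal using expectation_Max by blast
    done
qed

end
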